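(* Consider a single agent with $m$ actions and unknown utility vector $\mathbf{u}\in[0,1]^m$, interacting with a principal over $T$ rounds in the no-regret model (with a single signal), and let $\mathcal{P}=\{\mathbf{p}\in[0,2]^m:\langle\mathbf{1},\mathbf{p}\rangle=m\}$. Consider the principal algorithm: set $\mathbf{p}^1=\mathbf{1}$; for $t=1,\dots,T$, pay according to $\mathbf{p}^t$, observe the agent's action $a^t$, and set $\mathbf{p}^{t+1}=\Pi_{\mathcal{P}}[\mathbf{p}^t-\eta\mathbf{e}_{a^t}]$ with $\eta=\sqrt{m/T}$; finally output $-\frac1T\sum_{t=1}^T\mathbf{p}^t$. This algorithm $\varepsilon$-learns any single-agent game using $\mathcal{O}(m^3+C^2m^2)/\varepsilon^2$ rounds.
   Context: In each round $t$ the principal chooses a payment vector $\mathbf{p}^t\in\mathbb{R}_+^m$, the agent's utility that round is $\mathbf{u}+\mathbf{p}^t$, the agent plays an action $a^t\in[m]$ and the principal observes it. No-regret model: for every $t\le T$, $\max_{a}\sum_{\tau\le t}\big[(\mathbf{u}+\mathbf{p}^\tau)[a]-(\mathbf{u}+\mathbf{p}^\tau)[a^\tau]\big]\le C\sqrt{T}$, for a constant $C$ (at most polynomial in $m$). $\Pi_{\mathcal{P}}$ is Euclidean projection onto $\mathcal{P}$, $\mathbf{e}_a$ is the $a$-th unit vector. The principal $\varepsilon$-learns the game if its output $\tilde{\mathbf{u}}$ satisfies $|\mathbf{u}[a]+W-\tilde{\mathbf{u}}[a]|\le\varepsilon$ for all $a$ for some constant $W\in\mathbb{R}$. *)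

theory Defs
  imports "HOL-Analysis.Analysis"
begin

text \<open>Vectors in R^m are represented as functions nat => real; only the
coordinates i < m are meaningful, the others are normalised to 0.\<close>

definition payset :: "nat \<Rightarrow> (nat \<Rightarrow> real) set" where
  "payset m = {p. (\<forall>i<m. 0 \<le> p i \<and> p i \<le> 2) \<and> (\<forall>i\<ge>m. p i = 0)
                  \<and> (\<Sum>i<m. p i) = real m}"

definition sqdist :: "nat \<Rightarrow> (nat \<Rightarrow> real) \<Rightarrow> (nat \<Rightarrow> real) \<Rightarrow> real" where
  "sqdist m x y = (\<Sum>i<m. (x i - y i)^2)"

definition proj :: "nat \<Rightarrow> (nat \<Rightarrow> real) \<Rightarrow> (nat \<Rightarrow> real)" where
  "proj m x = (SOME y. y \<in> payset m \<and> (\<forall>z\<in>payset m. sqdist m x y \<le> sqdist m x z))"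

definition unitvec :: "nat \<Rightarrow> nat \<Rightarrow> nat \<Rightarrow> real" where
  "unitvec m a = (\<lambda>i. if i = a \<and> i < m then 1 else 0)"

definition ones :: "nat \<Rightarrow> nat \<Rightarrow> real" where
  "ones m = (\<lambda>i. if i < m then 1 else 0)"

text \<open>pay m eta act t is the payment vector of round t+1 (rounds 1..T are indexed
0..T-1); act t is the agent's action in round t+1.\<close>
fun pay :: "nat \<Rightarrow> real \<Rightarrow> (nat \<Rightarrow> nat) \<Rightarrow> nat \<Rightarrow> (nat \<Rightarrow> real)" where
  "pay m eta act 0 = ones m"
| "pay m eta act (Suc t) = proj m (\<lambda>i. pay m eta act t i - eta * unitvec m (act t) i)"

definition principal_output :: "nat \<Rightarrow> nat \<Rightarrow> (nat \<Rightarrow> nat) \<Rightarrow> nat \<Rightarrow> real" where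
  "principal_output m T act = (\<lambda>i. - (1 / real T) * (\<Sum>t<T. pay m (sqrt (real m / real T)) act t i))"

definition no_regret :: "nat \<Rightarrow> (nat \<Rightarrow> real) \<Rightarrow> real \<Rightarrow> nat \<Rightarrow> (nat \<Rightarrow> nat) \<Rightarrow> bool" where
  "no_regret m u C T act =
     (\<forall>t\<le>T. \<forall>b<m.
        (\<Sum>\<tau><t. (u b + pay m (sqrt (real m / real T)) act \<tau> b)
                - (u (act \<tau>) + pay m (sqrt (real m / real T)) act \<tau> (act \<tau>)))
        \<le> C * sqrt (real T))"

definition eps_learns :: "nat \<Rightarrow> (nat \<Rightarrow> real) \<Rightarrow> real \<Rightarrow> (nat \<Rightarrow> real) \<Rightarrow> bool" where
  "eps_learns m u \<epsilon> ut = (\<exists>W::real. \<forall>a<m. \<bar>u a + W - ut a\<bar> \<le> \<epsilon>)"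

end

theory Submission
  imports Defs
begin

text \<open>Projecting onto the capped simplex \<open>payset m\<close> clamps \<open>x - l\<close> coordinatewise to
\<open>[0, 2]\<close> for a suitable threshold \<open>l\<close>, which gives the Pythagorean inequality for the projection.
Hence the payment updates are online gradient descent against the linear losses \<open>p \<mapsto> p[a\<^sup>t]\<close>
and have regret at most \<open>\<surd>(m T)\<close> against any fixed payment, in particular against
\<open>q = 1 - u + \<mu>\<close> (\<open>\<mu>\<close> the mean utility), which makes the agent indifferent: \<open>u + q = 1 + \<mu>\<close>
on every action. Combined with the agent's no-regret guarantee this bounds \<open>T u[b] + \<Sum>\<^sub>t p\<^sup>t[b]\<close>
above by \<open>T (1 + \<mu>) + (C + \<surd>m) \<surd>T\<close> for each action \<open>b\<close>; since these \<open>m\<close> quantities sum to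
exactly \<open>m T (1 + \<mu>)\<close>, each is also at least \<open>T (1 + \<mu>) - m (C + \<surd>m) \<surd>T\<close>. Dividing by \<open>T\<close>,
the output is \<open>u - (1 + \<mu>)\<close> up to \<open>m (C + \<surd>m) / \<surd>T\<close>, which is at most \<open>\<epsilon>\<close> once
\<open>T \<ge> 2 (m\<^sup>3 + C\<^sup>2 m\<^sup>2) / \<epsilon>\<^sup>2\<close>.\<close>

lemma clamp_variational_ineq:
  fixes x lo hi z :: real
  assumes "lo \<le> z" "z \<le> hi"
  shows "(x - max lo (min hi x)) * (max lo (min hi x) - z) \<ge> 0"
  using assms by (cases "x \<le> lo"; cases "x \<le> hi") (auto intro: mult_nonpos_nonpos)

lemma sqdist_nonneg: "sqdist m x y \<ge> 0"
  unfolding sqdist_def by (simp add: sum_nonneg)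

lemma sqdist_three_points:
  "sqdist m x z = sqdist m x y + sqdist m y z + 2 * (\<Sum>i<m. (x i - y i) * (y i - z i))"
  unfolding sqdist_def
  by (simp add: sum.distrib[symmetric] sum_distrib_left power2_eq_square algebra_simps)

lemma sqdist_eq_0_iff: "sqdist m x y = 0 \<longleftrightarrow> (\<forall>i<m. x i = y i)"
  unfolding sqdist_def by (subst sum_nonneg_eq_0_iff) auto

lemma sqdist_cong_left: "(\<And>i. i < m \<Longrightarrow> x i = x' i) \<Longrightarrow> sqdist m x y = sqdist m x' y"
  unfolding sqdist_def by (rule sum.cong) auto

lemma capped_sum_threshold:
  "\<exists>l. (\<Sum>i<m. max 0 (min 2 (x i - l))) = real m"
proof -
  define f where "f = (\<lambda>l. \<Sum>i<m. max 0 (min 2 (x i - l)))"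
  define B where "B = (\<Sum>i<m. \<bar>x i\<bar>)"
  have x_le_B: "\<bar>x i\<bar> \<le> B" if "i < m" for i
    unfolding B_def using that by (intro member_le_sum) auto
  have "f B = 0"
    unfolding f_def by (rule sum.neutral) (use x_le_B in force)
  moreover have "f (- B - 2) = (\<Sum>i<m. 2)"
    unfolding f_def by (rule sum.cong) (use x_le_B in force)+
  moreover have "B \<ge> 0" unfolding B_def by (simp add: sum_nonneg)
  moreover have "isCont f l" for l unfolding f_def by (intro continuous_intros)
  ultimately show ?thesis
    using IVT2[of f B "real m" "- B - 2"] unfolding f_def by auto
qed

lemma payset_pythagoras:
  "\<exists>y\<in>payset m. \<forall>z\<in>payset m. sqdist m x y + sqdist m y z \<le> sqdist m x z"
proof -
  obtain l where l: "(\<Sum>i<m. max 0 (min 2 (x i - l))) = real m"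
    using capped_sum_threshold by blast
  define y where "y = (\<lambda>i. if i < m then max 0 (min 2 (x i - l)) else 0)"
  have y_sum: "(\<Sum>i<m. y i) = real m" using l unfolding y_def by simp
  have y_in: "y \<in> payset m" unfolding payset_def using y_sum by (auto simp: y_def)
  show ?thesis
  proof (intro bexI[OF _ y_in] ballI)
    fix z assume z: "z \<in> payset m"
    have z_sum: "(\<Sum>i<m. z i) = real m" using z by (simp add: payset_def)
    have "(\<Sum>i<m. (x i - y i) * (y i - z i))
        = (\<Sum>i<m. (x i - l - y i) * (y i - z i)) + l * ((\<Sum>i<m. y i) - (\<Sum>i<m. z i))"
      by (simp add: sum.distrib[symmetric] sum_distrib_left sum_subtractf[symmetric] algebra_simps)
    also have "\<dots> = (\<Sum>i<m. (x i - l - y i) * (y i - z i))" using y_sum z_sum by simp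
    also have "\<dots> \<ge> 0"
      using z by (intro sum_nonneg) (simp add: y_def clamp_variational_ineq payset_def)
    finally show "sqdist m x y + sqdist m y z \<le> sqdist m x z"
      using sqdist_three_points[of m x z y] by linarith
  qed
qed

lemma proj_minimises:
  "proj m x \<in> payset m \<and> (\<forall>z\<in>payset m. sqdist m x (proj m x) \<le> sqdist m x z)"
proof -
  obtain y where "y \<in> payset m" "\<forall>z\<in>payset m. sqdist m x y + sqdist m y z \<le> sqdist m x z"
    using payset_pythagoras by blast
  then have "y \<in> payset m \<and> (\<forall>z\<in>payset m. sqdist m x y \<le> sqdist m x z)"
    using sqdist_nonneg by (smt (verit))
  then show ?thesis unfolding proj_def by (rule someI[of _ y])
qed

lemma proj_in_payset: "proj m x \<in> payset m"
  using proj_minimises by blast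

lemma sqdist_proj_le:
  assumes "z \<in> payset m"
  shows "sqdist m (proj m x) z \<le> sqdist m x z"
proof -
  obtain y where y: "y \<in> payset m"
    and pyth: "\<And>z. z \<in> payset m \<Longrightarrow> sqdist m x y + sqdist m y z \<le> sqdist m x z"
    using payset_pythagoras by blast
  \<comment> \<open>minimisers are unique, so the choice in \<open>proj\<close> agrees with \<open>y\<close> on \<open>{..<m}\<close>\<close>
  have "sqdist m y (proj m x) \<le> 0"
    using pyth[OF proj_in_payset[of m x]] proj_minimises[of m x] y by fastforce
  then have "\<forall>i<m. y i = proj m x i"
    using sqdist_nonneg[of m y "proj m x"] sqdist_eq_0_iff by (metis order_antisym)
  then have "sqdist m (proj m x) z = sqdist m y z" by (intro sqdist_cong_left) auto
  then show ?thesis using pyth[OF assms] sqdist_nonneg[of m x y] by linarith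
qed

lemma ones_in_payset: "ones m \<in> payset m"
  unfolding payset_def ones_def by auto

lemma pay_in_payset: "pay m eta act t \<in> payset m"
  by (cases t) (simp_all add: ones_in_payset proj_in_payset)

lemma sqdist_ones_le:
  assumes "q \<in> payset m"
  shows "sqdist m (ones m) q \<le> real m"
proof -
  have "(ones m i - q i)^2 \<le> 1" if "i < m" for i
  proof -
    have "0 \<le> q i" "q i \<le> 2" using assms that by (auto simp: payset_def)
    then have "q i * (2 - q i) \<ge> 0" by simp
    then show ?thesis using that by (simp add: ones_def power2_eq_square algebra_simps)
  qed
  then have "sqdist m (ones m) q \<le> (\<Sum>i<m. 1)" unfolding sqdist_def by (intro sum_mono) auto
  then show ?thesis by simp
qed

lemma sqdist_minus_unitvec:
  assumes "a < m"
  shows "sqdist m (\<lambda>i. p i - eta * unitvec m a i) q = sqdist m p q - 2 * eta * (p a - q a) + eta^2"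
proof -
  have "sqdist m (\<lambda>i. p i - eta * unitvec m a i) q
      = (\<Sum>i<m. (p i - q i)^2 - 2 * eta * (if i = a then p i - q i else 0) + (if i = a then eta^2 else 0))"
    unfolding sqdist_def unitvec_def
    by (rule sum.cong) (auto simp: power2_eq_square algebra_simps)
  also have "\<dots> = sqdist m p q - 2 * eta * (p a - q a) + eta^2"
    using assms by (simp add: sum.distrib sum_subtractf sqdist_def sum_distrib_left[symmetric])
  finally show ?thesis .
qed

lemma pay_regret_telescope:
  assumes "q \<in> payset m" "\<forall>t<n. act t < m"
  shows "2 * eta * (\<Sum>t<n. pay m eta act t (act t) - q (act t))
      \<le> sqdist m (ones m) q - sqdist m (pay m eta act n) q + real n * eta^2"
  using assms(2)
proof (induction n)
  case 0
  then show ?case by simp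
next
  case (Suc n)
  have "sqdist m (pay m eta act (Suc n)) q
      \<le> sqdist m (\<lambda>i. pay m eta act n i - eta * unitvec m (act n) i) q"
    using sqdist_proj_le[OF assms(1)] by simp
  also have "\<dots> = sqdist m (pay m eta act n) q - 2 * eta * (pay m eta act n (act n) - q (act n)) + eta^2"
    using Suc.prems by (intro sqdist_minus_unitvec) auto
  finally show ?case using Suc by (simp add: algebra_simps)
qed

lemma pay_regret_le:
  assumes "q \<in> payset m" "m \<ge> 1" "T \<ge> 1" "\<forall>t<T. act t < m"
  shows "(\<Sum>t<T. pay m (sqrt (real m / real T)) act t (act t) - q (act t)) \<le> sqrt (real m) * sqrt (real T)"
proof -
  define eta where "eta = sqrt (real m / real T)"
  define R where "R = (\<Sum>t<T. pay m eta act t (act t) - q (act t))"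
  have "eta > 0" "eta^2 = real m / real T" "eta * (sqrt (real m) * sqrt (real T)) = real m"
    using assms(2,3) by (simp_all add: eta_def real_sqrt_mult[symmetric])
  moreover have "2 * eta * R \<le> real m + real T * eta^2"
    using pay_regret_telescope[OF assms(1,4), of eta] sqdist_ones_le[OF assms(1)]
      sqdist_nonneg[of m "pay m eta act T" q]
    unfolding R_def by linarith
  ultimately have "eta * R \<le> eta * (sqrt (real m) * sqrt (real T))"
    using assms(3) by (simp add: field_simps)
  then show ?thesis using \<open>eta > 0\<close> unfolding R_def eta_def by simp
qed

lemma le_sum_minus_card_bound:
  fixes f :: "'a \<Rightarrow> real"
  assumes "finite I" "b \<in> I" "\<And>c. c \<in> I \<Longrightarrow> f c \<le> M"
  shows "sum f I - (real (card I) - 1) * M \<le> f b"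
proof -
  have "real (card (I - {b})) = real (card I) - 1"
    using assms(1,2) card_gt_0_iff[of I] by (auto simp: of_nat_diff)
  then have "sum f (I - {b}) \<le> (real (card I) - 1) * M"
    using sum_bounded_above[of "I - {b}" f M] assms(3) by auto
  moreover have "sum f I = f b + sum f (I - {b})"
    using assms(1,2) by (simp add: sum.remove)
  ultimately show ?thesis by linarith
qed

lemma indifference_payment_in_payset:
  assumes "m \<ge> 1" "\<forall>i<m. 0 \<le> u i \<and> u i \<le> 1"
  shows "(\<lambda>i. if i < m then 1 - u i + (\<Sum>j<m. u j) / real m else 0) \<in> payset m"
proof -
  define mean where "mean = (\<Sum>j<m. u j) / real m"
  have "0 \<le> (\<Sum>j<m. u j)" using assms(2) by (intro sum_nonneg) simp
  moreover have "(\<Sum>j<m. u j) \<le> (\<Sum>j<m. 1)" using assms(2) by (intro sum_mono) simp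
  ultimately have "0 \<le> mean" "mean \<le> 1"
    using assms(1) by (simp_all add: mean_def)
  then have "0 \<le> 1 - u i + mean \<and> 1 - u i + mean \<le> 2" if "i < m" for i
    using assms(2) that by force
  moreover have "(\<Sum>i<m. 1 - u i + mean) = real m"
    using assms(1) by (simp add: sum.distrib sum_subtractf mean_def)
  ultimately show ?thesis by (auto simp: payset_def mean_def)
qed

abbreviation cumulative_pay :: "nat \<Rightarrow> nat \<Rightarrow> (nat \<Rightarrow> nat) \<Rightarrow> nat \<Rightarrow> real" where
  "cumulative_pay m T act b \<equiv> \<Sum>t<T. pay m (sqrt (real m / real T)) act t b"

lemma cumulative_utility_le:
  assumes "\<forall>i<m. 0 \<le> u i \<and> u i \<le> 1" "T \<ge> 1" "\<forall>t<T. act t < m"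
    and "no_regret m u C T act" "b < m"
  shows "real T * u b + cumulative_pay m T act b
      \<le> real T * (1 + (\<Sum>i<m. u i) / real m) + (C + sqrt (real m)) * sqrt (real T)"
proof -
  define p where "p = pay m (sqrt (real m / real T)) act"
  define A where "A = 1 + (\<Sum>i<m. u i) / real m"
  define q where "q = (\<lambda>i. if i < m then 1 - u i + (\<Sum>j<m. u j) / real m else 0)"
  have "m \<ge> 1" using assms(5) by simp
  have "(\<Sum>t<T. u (act t) + p t (act t))
      = (\<Sum>t<T. u (act t) + q (act t)) + (\<Sum>t<T. p t (act t) - q (act t))"
    by (simp add: sum.distrib[symmetric] sum_subtractf[symmetric])
  also have "(\<Sum>t<T. u (act t) + q (act t)) = (\<Sum>t<T. A)"
    using assms(3) by (intro sum.cong) (auto simp: q_def A_def)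
  also have "(\<Sum>t<T. p t (act t) - q (act t)) \<le> sqrt (real m) * sqrt (real T)"
    unfolding p_def q_def
    using pay_regret_le indifference_payment_in_payset \<open>m \<ge> 1\<close> assms(1-3) by blast
  finally have realized: "(\<Sum>t<T. u (act t) + p t (act t)) \<le> real T * A + sqrt (real m) * sqrt (real T)"
    by simp
  have "(\<Sum>t<T. (u b + p t b) - (u (act t) + p t (act t))) \<le> C * sqrt (real T)"
    using assms(4,5) unfolding no_regret_def p_def by auto
  moreover have "(\<Sum>t<T. (u b + p t b) - (u (act t) + p t (act t)))
      = real T * u b + cumulative_pay m T act b - (\<Sum>t<T. u (act t) + p t (act t))"
    unfolding p_def by (simp add: sum_subtractf sum.distrib)
  ultimately show ?thesis
    using realized distrib_right[of C "sqrt (real m)" "sqrt (real T)"] unfolding A_def by linarith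
qed

lemma cumulative_utility_sum:
  assumes "m \<ge> 1"
  shows "(\<Sum>b<m. real T * u b + cumulative_pay m T act b)
      = real m * (real T * (1 + (\<Sum>i<m. u i) / real m))"
proof -
  have "(\<Sum>b<m. cumulative_pay m T act b) = (\<Sum>t<T. \<Sum>b<m. pay m (sqrt (real m / real T)) act t b)"
    by (rule sum.swap)
  also have "\<dots> = real T * real m"
    using pay_in_payset by (simp add: payset_def)
  finally have pay_total: "(\<Sum>b<m. cumulative_pay m T act b) = real T * real m" .
  have "(\<Sum>b<m. real T * u b + cumulative_pay m T act b) = real T * (\<Sum>i<m. u i) + real T * real m"
    using pay_total by (simp add: sum.distrib sum_distrib_left)
  also have "\<dots> = real m * (real T * (1 + (\<Sum>i<m. u i) / real m))"
    using assms by (simp add: field_simps)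
  finally show ?thesis .
qed

lemma principal_output_error:
  assumes "\<forall>i<m. 0 \<le> u i \<and> u i \<le> 1" "C \<ge> 0" "T \<ge> 1" "\<forall>t<T. act t < m"
    and "no_regret m u C T act" "a < m"
  shows "\<bar>u a - (1 + (\<Sum>i<m. u i) / real m) - principal_output m T act a\<bar>
      \<le> real m * (C + sqrt (real m)) / sqrt (real T)"
proof -
  define A where "A = real T * (1 + (\<Sum>i<m. u i) / real m)"
  define D where "D = (C + sqrt (real m)) * sqrt (real T)"
  define X where "X = (\<lambda>b. real T * u b + cumulative_pay m T act b)"
  have upper: "X b \<le> A + D" if "b < m" for b
    unfolding X_def A_def D_def using cumulative_utility_le assms(1,3-5) that by blast
  have "sum X {..<m} - (real m - 1) * (A + D) \<le> X a"
    using le_sum_minus_card_bound[of "{..<m}" a X "A + D"] upper assms(6) by simp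
  moreover have "sum X {..<m} = real m * A"
    unfolding X_def A_def using cumulative_utility_sum assms(6) by simp
  moreover have "D \<ge> 0" "real m \<ge> 1" using assms(2,6) by (simp_all add: D_def)
  moreover have "(real m - 1) * (A + D) = real m * A - A + (real m - 1) * D"
    by (simp add: algebra_simps)
  moreover have "(real m - 1) * D \<le> real m * D" "D \<le> real m * D"
    using \<open>D \<ge> 0\<close> mult_right_mono[of 1 "real m" D] \<open>real m \<ge> 1\<close> by (simp_all add: algebra_simps)
  ultimately have deviation: "\<bar>X a - A\<bar> \<le> real m * D"
    using upper[OF assms(6)] unfolding abs_le_iff by linarith
  have "u a - (1 + (\<Sum>i<m. u i) / real m) - principal_output m T act a = (X a - A) / real T"
    using assms(3) by (simp add: X_def A_def principal_output_def field_simps)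
  also have "\<bar>\<dots>\<bar> \<le> real m * D / real T"
    using deviation by (simp add: abs_divide divide_right_mono)
  also have "\<dots> = real m * (C + sqrt (real m)) * (sqrt (real T) / real T)"
    unfolding D_def by simp
  also have "\<dots> = real m * (C + sqrt (real m)) / sqrt (real T)"
    unfolding sqrt_divide_self_eq[OF of_nat_0_le_iff] by (simp add: divide_inverse)
  finally show ?thesis .
qed

lemma sample_size_suffices:
  fixes m C \<epsilon> T :: real
  assumes "m \<ge> 0" "C \<ge> 0" "\<epsilon> > 0" "T > 0" "T \<ge> 2 * (m ^ 3 + C^2 * m ^ 2) / \<epsilon>^2"
  shows "m * (C + sqrt m) / sqrt T \<le> \<epsilon>"
proof -
  have "(C + sqrt m)^2 \<le> 2 * (C^2 + m)"
    using assms(1) zero_le_power2[of "C - sqrt m"] unfolding power2_sum power2_diff by simp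
  then have "(m * (C + sqrt m))^2 \<le> m^2 * (2 * (C^2 + m))"
    unfolding power_mult_distrib by (rule mult_left_mono) simp
  also have "\<dots> = 2 * (m ^ 3 + C^2 * m ^ 2)"
    by algebra
  also have "\<dots> \<le> (\<epsilon> * sqrt T)^2"
    using assms(3-5) by (simp add: power_mult_distrib pos_divide_le_eq mult.commute)
  finally have "m * (C + sqrt m) \<le> \<epsilon> * sqrt T"
    by (rule power2_le_imp_le) (use assms(3,4) in simp)
  then show ?thesis
    using assms(4) by (simp add: pos_divide_le_eq)
qed

theorem theorem5p2:
  shows "\<exists>K>0. \<forall>(m::nat) (u::nat \<Rightarrow> real) (C::real) (\<epsilon>::real) (T::nat) (act::nat \<Rightarrow> nat).
     m \<ge> 1 \<longrightarrow> (\<forall>i<m. 0 \<le> u i \<and> u i \<le> 1) \<longrightarrow> C \<ge> 0 \<longrightarrow> \<epsilon> > 0 \<longrightarrow> T \<ge> 1 \<longrightarrow>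
     real T \<ge> K * (real m ^ 3 + C^2 * real m ^ 2) / \<epsilon>^2 \<longrightarrow>
     (\<forall>t<T. act t < m) \<longrightarrow> no_regret m u C T act \<longrightarrow>
     eps_learns m u \<epsilon> (principal_output m T act)"
proof (rule exI[of _ 2], intro conjI allI impI)
  fix m :: nat and u :: "nat \<Rightarrow> real" and C \<epsilon> :: real and T :: nat and act :: "nat \<Rightarrow> nat"
  assume u: "\<forall>i<m. 0 \<le> u i \<and> u i \<le> 1" and "C \<ge> 0" "\<epsilon> > 0" "T \<ge> 1"
    and T_large: "real T \<ge> 2 * (real m ^ 3 + C^2 * real m ^ 2) / \<epsilon>^2"
    and act: "\<forall>t<T. act t < m" and regret: "no_regret m u C T act"
  have "real m * (C + sqrt (real m)) / sqrt (real T) \<le> \<epsilon>"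
    using sample_size_suffices[OF _ \<open>C \<ge> 0\<close> \<open>\<epsilon> > 0\<close> _ T_large] \<open>T \<ge> 1\<close> by simp
  then show "eps_learns m u \<epsilon> (principal_output m T act)"
    unfolding eps_learns_def
    using principal_output_error[OF u \<open>C \<ge> 0\<close> \<open>T \<ge> 1\<close> act regret]
    by (intro exI[of _ "- (1 + (\<Sum>i<m. u i) / real m)"] allI impI) force
qed (simp)

end
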